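(* Let $R$ be a ring all of whose idempotents are central, let $I$ be an ideal of $R$, and suppose $R$ is weakly $I$-clean. Let $n\ge 1$ and let $S=\{[a_{ij}]\in T_n(R)\mid a_{ii}=a_{jj}\text{ for all }i,j\}$. Then $I'=\{[a_{ij}]\in S\mid a_{11}\in I\}$ is an ideal of $S$, the idempotents of $S$ are exactly the matrices $eI_n$ with $e\in Idem(R)$, and $S$ is weakly $I'$-clean.
   Context: All rings are associative with identity; $Idem(R)$ is the set of idempotents of $R$. $T_n(R)$ is the ring of $n\times n$ upper triangular matrices over $R$ with the usual operations, and $I_n$ is the identity matrix. For an ideal $I$ of $R$, $R$ is weakly $I$-clean if for every $x\in R$ there is $e\in Idem(R)$ such that $x-e\in I$ or $x+e\in I$. *)

theory Defs
  imports "HOL-Algebra.Algebra"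
begin

definition idems :: "('a, 'b) ring_scheme \<Rightarrow> 'a set" where
  "idems R = {e \<in> carrier R. e \<otimes>\<^bsub>R\<^esub> e = e}"

definition idempotents_central :: "('a, 'b) ring_scheme \<Rightarrow> bool" where
  "idempotents_central R \<longleftrightarrow>
     (\<forall>e \<in> idems R. \<forall>x \<in> carrier R. e \<otimes>\<^bsub>R\<^esub> x = x \<otimes>\<^bsub>R\<^esub> e)"

definition weakly_clean :: "('a, 'b) ring_scheme \<Rightarrow> 'a set \<Rightarrow> bool" where
  "weakly_clean R I \<longleftrightarrow>
     (\<forall>x \<in> carrier R. \<exists>e \<in> idems R.
        x \<ominus>\<^bsub>R\<^esub> e \<in> I \<or> x \<oplus>\<^bsub>R\<^esub> e \<in> I)"

text \<open>The ring T_n(R) of n x n upper triangular matrices over R. Matrices are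
  functions nat => nat => 'a, indices 0..n-1, entries outside the n x n block
  (and below the diagonal) are zero.\<close>
definition upper_tri_ring :: "('a, 'b) ring_scheme \<Rightarrow> nat \<Rightarrow> (nat \<Rightarrow> nat \<Rightarrow> 'a) ring" where
  "upper_tri_ring R n =
    \<lparr> carrier = {A. (\<forall>i j. A i j \<in> carrier R) \<and>
                   (\<forall>i j. (j < i \<or> n \<le> i \<or> n \<le> j) \<longrightarrow> A i j = \<zero>\<^bsub>R\<^esub>)},
      monoid.mult = (\<lambda>A B i j. if i < n \<and> j < n
                        then (\<Oplus>\<^bsub>R\<^esub> k \<in> {..<n}. A i k \<otimes>\<^bsub>R\<^esub> B k j) else \<zero>\<^bsub>R\<^esub>),
      one = (\<lambda>i j. if i = j \<and> i < n then \<one>\<^bsub>R\<^esub> else \<zero>\<^bsub>R\<^esub>),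
      ring.zero = (\<lambda>i j. \<zero>\<^bsub>R\<^esub>),
      ring.add = (\<lambda>A B i j. A i j \<oplus>\<^bsub>R\<^esub> B i j) \<rparr>"

definition const_diag_ring :: "('a, 'b) ring_scheme \<Rightarrow> nat \<Rightarrow> (nat \<Rightarrow> nat \<Rightarrow> 'a) ring" where
  "const_diag_ring R n =
    (upper_tri_ring R n) \<lparr> carrier :=
      {A \<in> carrier (upper_tri_ring R n). \<forall>i < n. \<forall>j < n. A i i = A j j} \<rparr>"

definition scalar_mat :: "('a, 'b) ring_scheme \<Rightarrow> nat \<Rightarrow> 'a \<Rightarrow> nat \<Rightarrow> nat \<Rightarrow> 'a" where
  "scalar_mat R n e = (\<lambda>i j. if i = j \<and> i < n then e else \<zero>\<^bsub>R\<^esub>)"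

end

theory Submission
  imports Defs
begin

(* Taking the diagonal entry, A \<mapsto> A 0 0, is a ring homomorphism from S onto R, and
   e \<mapsto> e I_n is a ring homomorphism back which splits it. Hence I' is the preimage of I,
   an ideal, and weak cleanness pulls back along the diagonal map because idempotents lift.
   The real content is that every idempotent A of S is scalar: its diagonal entry a is an
   idempotent of R, hence central, and by induction on j - i idempotency reads
   A_ij = a A_ij + A_ij a above the diagonal, which forces A_ij = 0. *)

lemma idems_ring_hom_image:
  assumes "h \<in> ring_hom R S"
  shows "h ` idems R \<subseteq> idems S"
proof
  fix y assume "y \<in> h ` idems R"
  then obtain e where e: "e \<in> carrier R" "e \<otimes>\<^bsub>R\<^esub> e = e" and y: "y = h e"
    by (auto simp: idems_def)
  have "h e \<otimes>\<^bsub>S\<^esub> h e = h e"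
    using ring_hom_mult[OF assms e(1) e(1)] e(2) by simp
  then show "y \<in> idems S"
    using assms e y by (simp add: idems_def ring_hom_closed)
qed

lemma (in ring_hom_ring) weakly_clean_vimage:
  assumes clean: "weakly_clean S I"
    and lift: "\<And>e. e \<in> idems S \<Longrightarrow> \<exists>f \<in> idems R. h f = e"
  shows "weakly_clean R {x \<in> carrier R. h x \<in> I}"
  unfolding weakly_clean_def
proof
  fix x assume x: "x \<in> carrier R"
  obtain e where e: "e \<in> idems S" and eI: "h x \<ominus>\<^bsub>S\<^esub> e \<in> I \<or> h x \<oplus>\<^bsub>S\<^esub> e \<in> I"
    using clean hom_closed[OF x] unfolding weakly_clean_def by blast
  obtain f where f: "f \<in> idems R" and hf: "h f = e"
    using lift[OF e] by blast
  have "f \<in> carrier R" using f by (simp add: idems_def)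
  then have "h (x \<ominus> f) = h x \<ominus>\<^bsub>S\<^esub> e" "h (x \<oplus> f) = h x \<oplus>\<^bsub>S\<^esub> e"
    using x hf by (simp_all add: a_minus_def)
  with eI f x \<open>f \<in> carrier R\<close> show "\<exists>f \<in> idems R. x \<ominus> f \<in> {x \<in> carrier R. h x \<in> I}
      \<or> x \<oplus> f \<in> {x \<in> carrier R. h x \<in> I}"
    by auto
qed

context ring
begin

lemma idem_mult_add_mult_idem_eq_self_imp_zero:
  assumes e: "e \<in> carrier R" "e \<otimes> e = e" and x: "x \<in> carrier R"
    and comm: "e \<otimes> x = x \<otimes> e" and eq: "e \<otimes> x \<oplus> x \<otimes> e = x"
  shows "x = \<zero>"
proof -
  have x2: "e \<otimes> x \<oplus> e \<otimes> x = x" using eq comm by simp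
  have "e \<otimes> x = e \<otimes> (e \<otimes> x \<oplus> e \<otimes> x)" using x2 by simp
  also have "\<dots> = e \<otimes> x \<oplus> e \<otimes> x"
    using e x by (simp add: r_distr m_assoc[symmetric])
  finally have "e \<otimes> x \<oplus> e \<otimes> x = e \<otimes> x" by (rule sym)
  then have "e \<otimes> x = \<zero>"
    using e x by (simp add: add.l_cancel_one')
  then show ?thesis using x2 by simp
qed

lemma finsum_eq_single:
  assumes "finite K" "i \<in> K" "f \<in> K \<rightarrow> carrier R" "\<And>k. k \<in> K \<Longrightarrow> k \<noteq> i \<Longrightarrow> f k = \<zero>"
  shows "(\<Oplus>k\<in>K. f k) = f i"
proof -
  have "(\<Oplus>k\<in>K. f k) = (\<Oplus>k\<in>K. if i = k then f k else \<zero>)"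
    by (rule finsum_cong') (use assms in auto)
  also have "\<dots> = f i"
    by (rule finsum_singleton[OF assms(2,1,3)])
  finally show ?thesis .
qed

lemma finsum_eq_two:
  assumes "finite K" "i \<in> K" "j \<in> K" "i \<noteq> j" "f \<in> K \<rightarrow> carrier R"
    and "\<And>k. k \<in> K \<Longrightarrow> k \<noteq> i \<Longrightarrow> k \<noteq> j \<Longrightarrow> f k = \<zero>"
  shows "(\<Oplus>k\<in>K. f k) = f i \<oplus> f j"
proof -
  have "(\<Oplus>k\<in>K. f k) = (\<Oplus>k\<in>{i, j}. f k)"
    using assms by (intro add.finprod_mono_neutral_cong_right) auto
  also have "\<dots> = f i \<oplus> f j"
    using assms by (subst finsum_insert) (auto simp: Pi_def)
  finally show ?thesis .
qed

lemma finsum_swap: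
  assumes "finite K" "finite L" "\<And>k l. f k l \<in> carrier R"
  shows "(\<Oplus>k\<in>K. \<Oplus>l\<in>L. f k l) = (\<Oplus>l\<in>L. \<Oplus>k\<in>K. f k l)"
  using assms(1)
proof (induction K rule: finite_induct)
  case empty
  then show ?case by (simp add: finsum_zero)
next
  case (insert x F)
  have "(\<Oplus>k\<in>insert x F. \<Oplus>l\<in>L. f k l) = (\<Oplus>l\<in>L. f x l) \<oplus> (\<Oplus>k\<in>F. \<Oplus>l\<in>L. f k l)"
    using insert assms by (subst finsum_insert) (auto intro: finsum_closed)
  also have "\<dots> = (\<Oplus>l\<in>L. f x l \<oplus> (\<Oplus>k\<in>F. f k l))"
    using insert assms by (subst finsum_addf) (auto intro: finsum_closed)
  also have "\<dots> = (\<Oplus>l\<in>L. \<Oplus>k\<in>insert x F. f k l)"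
    using insert assms by (intro finsum_cong') (auto simp: finsum_insert)
  finally show ?case .
qed

context
  fixes n :: nat
begin

abbreviation T :: "(nat \<Rightarrow> nat \<Rightarrow> 'a) ring" where
  "T \<equiv> upper_tri_ring R n"

lemma upper_tri_carrier_iff:
  "A \<in> carrier T \<longleftrightarrow>
     (\<forall>i j. A i j \<in> carrier R) \<and> (\<forall>i j. (j < i \<or> n \<le> i \<or> n \<le> j) \<longrightarrow> A i j = \<zero>)"
  by (simp add: upper_tri_ring_def)

lemma upper_tri_mult:
  "A \<otimes>\<^bsub>T\<^esub> B = (\<lambda>i j. if i < n \<and> j < n then (\<Oplus>k\<in>{..<n}. A i k \<otimes> B k j) else \<zero>)"
  by (simp add: upper_tri_ring_def)

lemma upper_tri_add: "A \<oplus>\<^bsub>T\<^esub> B = (\<lambda>i j. A i j \<oplus> B i j)"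
  by (simp add: upper_tri_ring_def)

lemma upper_tri_one: "\<one>\<^bsub>T\<^esub> = (\<lambda>i j. if i = j \<and> i < n then \<one> else \<zero>)"
  by (simp add: upper_tri_ring_def)

lemma upper_tri_zero: "\<zero>\<^bsub>T\<^esub> = (\<lambda>i j. \<zero>)"
  by (simp add: upper_tri_ring_def)

lemma upper_tri_carrierD:
  assumes "A \<in> carrier T"
  shows "A i j \<in> carrier R" and "j < i \<Longrightarrow> A i j = \<zero>"
    and "n \<le> i \<Longrightarrow> A i j = \<zero>" and "n \<le> j \<Longrightarrow> A i j = \<zero>"
  using assms unfolding upper_tri_carrier_iff by blast+

lemma upper_tri_carrierI:
  assumes "\<And>i j. A i j \<in> carrier R" and "\<And>i j. j < i \<or> n \<le> i \<or> n \<le> j \<Longrightarrow> A i j = \<zero>"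
  shows "A \<in> carrier T"
  unfolding upper_tri_carrier_iff using assms by blast

lemma upper_tri_mult_closed:
  assumes A: "A \<in> carrier T" and B: "B \<in> carrier T"
  shows "A \<otimes>\<^bsub>T\<^esub> B \<in> carrier T"
proof (rule upper_tri_carrierI)
  note A' = upper_tri_carrierD[OF A] and B' = upper_tri_carrierD[OF B]
  show "(A \<otimes>\<^bsub>T\<^esub> B) i j \<in> carrier R" for i j
    using A'(1) B'(1) by (simp add: upper_tri_mult finsum_closed)
  show "(A \<otimes>\<^bsub>T\<^esub> B) i j = \<zero>" if "j < i \<or> n \<le> i \<or> n \<le> j" for i j
  proof (cases "i < n \<and> j < n")
    case True
    with that have "j < i" by auto
    then have "A i k \<otimes> B k j = \<zero>" for k
      using A'(1,2) B'(1,2) by (cases "k < i") auto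
    then show ?thesis using True by (simp add: upper_tri_mult finsum_zero)
  qed (auto simp: upper_tri_mult)
qed

lemma upper_tri_mult_diag:
  assumes A: "A \<in> carrier T" and B: "B \<in> carrier T" and i: "i < n"
  shows "(A \<otimes>\<^bsub>T\<^esub> B) i i = A i i \<otimes> B i i"
proof -
  note A' = upper_tri_carrierD[OF A] and B' = upper_tri_carrierD[OF B]
  have "(\<Oplus>k\<in>{..<n}. A i k \<otimes> B k i) = A i i \<otimes> B i i"
  proof (rule finsum_eq_single)
    show "A i k \<otimes> B k i = \<zero>" if "k \<noteq> i" for k
      using that A'(1,2) B'(1,2) by (cases "k < i") auto
  qed (use i A'(1) B'(1) in auto)
  then show ?thesis using i by (simp add: upper_tri_mult)
qed

lemma upper_tri_mult_assoc:
  assumes A: "A \<in> carrier T" and B: "B \<in> carrier T" and C: "C \<in> carrier T"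
  shows "A \<otimes>\<^bsub>T\<^esub> B \<otimes>\<^bsub>T\<^esub> C = A \<otimes>\<^bsub>T\<^esub> (B \<otimes>\<^bsub>T\<^esub> C)"
proof (intro ext)
  have c: "A i j \<in> carrier R" "B i j \<in> carrier R" "C i j \<in> carrier R" for i j
    using A B C by (simp_all add: upper_tri_carrierD)
  fix i j
  show "(A \<otimes>\<^bsub>T\<^esub> B \<otimes>\<^bsub>T\<^esub> C) i j = (A \<otimes>\<^bsub>T\<^esub> (B \<otimes>\<^bsub>T\<^esub> C)) i j"
  proof (cases "i < n \<and> j < n")
    case True
    have "(A \<otimes>\<^bsub>T\<^esub> B \<otimes>\<^bsub>T\<^esub> C) i j
        = (\<Oplus>k\<in>{..<n}. (\<Oplus>l\<in>{..<n}. A i l \<otimes> B l k) \<otimes> C k j)"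
      using True c by (simp add: upper_tri_mult, intro finsum_cong') (auto intro: finsum_closed)
    also have "\<dots> = (\<Oplus>k\<in>{..<n}. \<Oplus>l\<in>{..<n}. A i l \<otimes> B l k \<otimes> C k j)"
      using c by (intro finsum_cong') (auto simp: finsum_ldistr intro: finsum_closed)
    also have "\<dots> = (\<Oplus>l\<in>{..<n}. \<Oplus>k\<in>{..<n}. A i l \<otimes> B l k \<otimes> C k j)"
      using c by (intro finsum_swap) auto
    also have "\<dots> = (\<Oplus>l\<in>{..<n}. A i l \<otimes> (\<Oplus>k\<in>{..<n}. B l k \<otimes> C k j))"
      using c by (intro finsum_cong') (auto simp: finsum_rdistr m_assoc intro: finsum_closed)
    also have "\<dots> = (A \<otimes>\<^bsub>T\<^esub> (B \<otimes>\<^bsub>T\<^esub> C)) i j"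
      using True c by (simp add: upper_tri_mult, intro finsum_cong') (auto intro: finsum_closed)
    finally show ?thesis .
  qed (auto simp: upper_tri_mult)
qed

lemma upper_tri_one_mult:
  assumes A: "A \<in> carrier T"
  shows "\<one>\<^bsub>T\<^esub> \<otimes>\<^bsub>T\<^esub> A = A"
proof (intro ext)
  note A' = upper_tri_carrierD[OF A]
  fix i j
  show "(\<one>\<^bsub>T\<^esub> \<otimes>\<^bsub>T\<^esub> A) i j = A i j"
  proof (cases "i < n \<and> j < n")
    case True
    have "(\<Oplus>k\<in>{..<n}. (if i = k \<and> i < n then \<one> else \<zero>) \<otimes> A k j) = \<one> \<otimes> A i j"
      by (rule trans[OF finsum_eq_single[of _ i]]) (use True A'(1) in auto)
    then show ?thesis using True A'(1) by (simp add: upper_tri_mult upper_tri_one)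
  qed (use A'(3,4) in \<open>auto simp: upper_tri_mult\<close>)
qed

lemma upper_tri_mult_one:
  assumes A: "A \<in> carrier T"
  shows "A \<otimes>\<^bsub>T\<^esub> \<one>\<^bsub>T\<^esub> = A"
proof (intro ext)
  note A' = upper_tri_carrierD[OF A]
  fix i j
  show "(A \<otimes>\<^bsub>T\<^esub> \<one>\<^bsub>T\<^esub>) i j = A i j"
  proof (cases "i < n \<and> j < n")
    case True
    have "(\<Oplus>k\<in>{..<n}. A i k \<otimes> (if k = j \<and> k < n then \<one> else \<zero>)) = A i j \<otimes> \<one>"
      by (rule trans[OF finsum_eq_single[of _ j]]) (use True A'(1) in auto)
    then show ?thesis using True A'(1) by (simp add: upper_tri_mult upper_tri_one)
  qed (use A'(3,4) in \<open>auto simp: upper_tri_mult\<close>)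
qed

lemma upper_tri_ring_is_ring: "ring T"
proof (rule ringI)
  show "abelian_group T"
  proof (rule abelian_groupI)
    show "\<zero>\<^bsub>T\<^esub> \<in> carrier T"
      by (auto simp: upper_tri_zero upper_tri_carrier_iff)
    show "\<exists>B \<in> carrier T. B \<oplus>\<^bsub>T\<^esub> A = \<zero>\<^bsub>T\<^esub>" if "A \<in> carrier T" for A
      using that
      by (intro bexI[of _ "\<lambda>i j. \<ominus> A i j"]) (auto simp: upper_tri_carrier_iff upper_tri_add upper_tri_zero l_neg)
  qed (auto simp: upper_tri_carrier_iff upper_tri_add upper_tri_zero a_ac)
next
  show "monoid T"
  proof (rule monoidI)
    show "\<one>\<^bsub>T\<^esub> \<in> carrier T"
      by (auto simp: upper_tri_one upper_tri_carrier_iff)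
  qed (simp_all add: upper_tri_mult_closed upper_tri_mult_assoc upper_tri_one_mult upper_tri_mult_one)
next
  fix A B C assume A: "A \<in> carrier T" and B: "B \<in> carrier T" and C: "C \<in> carrier T"
  have c: "A i j \<in> carrier R" "B i j \<in> carrier R" "C i j \<in> carrier R" for i j
    using A B C by (simp_all add: upper_tri_carrierD)
  show "(A \<oplus>\<^bsub>T\<^esub> B) \<otimes>\<^bsub>T\<^esub> C = A \<otimes>\<^bsub>T\<^esub> C \<oplus>\<^bsub>T\<^esub> B \<otimes>\<^bsub>T\<^esub> C"
  proof (intro ext)
    fix i j
    have "(\<Oplus>k\<in>{..<n}. (A i k \<oplus> B i k) \<otimes> C k j)
        = (\<Oplus>k\<in>{..<n}. A i k \<otimes> C k j \<oplus> B i k \<otimes> C k j)"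
      by (intro finsum_cong') (auto simp: l_distr c)
    also have "\<dots> = (\<Oplus>k\<in>{..<n}. A i k \<otimes> C k j) \<oplus> (\<Oplus>k\<in>{..<n}. B i k \<otimes> C k j)"
      by (rule finsum_addf) (auto simp: c)
    finally show "((A \<oplus>\<^bsub>T\<^esub> B) \<otimes>\<^bsub>T\<^esub> C) i j = (A \<otimes>\<^bsub>T\<^esub> C \<oplus>\<^bsub>T\<^esub> B \<otimes>\<^bsub>T\<^esub> C) i j"
      by (simp add: upper_tri_mult upper_tri_add)
  qed
  show "C \<otimes>\<^bsub>T\<^esub> (A \<oplus>\<^bsub>T\<^esub> B) = C \<otimes>\<^bsub>T\<^esub> A \<oplus>\<^bsub>T\<^esub> C \<otimes>\<^bsub>T\<^esub> B"
  proof (intro ext)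
    fix i j
    have "(\<Oplus>k\<in>{..<n}. C i k \<otimes> (A k j \<oplus> B k j))
        = (\<Oplus>k\<in>{..<n}. C i k \<otimes> A k j \<oplus> C i k \<otimes> B k j)"
      by (intro finsum_cong') (auto simp: r_distr c)
    also have "\<dots> = (\<Oplus>k\<in>{..<n}. C i k \<otimes> A k j) \<oplus> (\<Oplus>k\<in>{..<n}. C i k \<otimes> B k j)"
      by (rule finsum_addf) (auto simp: c)
    finally show "(C \<otimes>\<^bsub>T\<^esub> (A \<oplus>\<^bsub>T\<^esub> B)) i j = (C \<otimes>\<^bsub>T\<^esub> A \<oplus>\<^bsub>T\<^esub> C \<otimes>\<^bsub>T\<^esub> B) i j"
      by (simp add: upper_tri_mult upper_tri_add)
  qed
qed

lemma upper_tri_neg: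
  assumes A: "A \<in> carrier T"
  shows "\<ominus>\<^bsub>T\<^esub> A = (\<lambda>i j. \<ominus> A i j)"
proof -
  note A' = upper_tri_carrierD[OF A]
  have neg: "(\<lambda>i j. \<ominus> A i j) \<in> carrier T"
    by (rule upper_tri_carrierI) (use A' in auto)
  have "(\<lambda>i j. \<ominus> A i j) \<oplus>\<^bsub>T\<^esub> A = \<zero>\<^bsub>T\<^esub>"
    using A'(1) by (simp add: upper_tri_add upper_tri_zero l_neg)
  then show ?thesis
    by (rule abelian_group.minus_equality[OF ring.is_abelian_group[OF upper_tri_ring_is_ring] _ A neg])
qed

lemma upper_tri_idem_above_diag_zero:
  assumes cent: "idempotents_central R" and a: "a \<in> idems R"
    and A: "A \<in> carrier T" and idem: "A \<otimes>\<^bsub>T\<^esub> A = A" and diag: "\<And>i. i < n \<Longrightarrow> A i i = a"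
    and ij: "i < j"
  shows "A i j = \<zero>"
proof -
  note A' = upper_tri_carrierD[OF A]
  have a_idem: "a \<in> carrier R" "a \<otimes> a = a" using a by (simp_all add: idems_def)
  have a_central: "a \<otimes> x = x \<otimes> a" if "x \<in> carrier R" for x
    using cent a that unfolding idempotents_central_def by blast
  have "A i j = \<zero>" if "j - i = d" "i < j" for d i j
    using that
  proof (induction d arbitrary: i j rule: less_induct)
    case (less d)
    show ?case
    proof (cases "j < n")
      case False
      then show ?thesis using A'(4) by simp
    next
      case j: True
      with less.prems have i: "i < n" by simp
      have "A i j = (A \<otimes>\<^bsub>T\<^esub> A) i j" using idem by simp
      also have "\<dots> = (\<Oplus>k\<in>{..<n}. A i k \<otimes> A k j)" using i j by (simp add: upper_tri_mult)
      also have "\<dots> = A i i \<otimes> A i j \<oplus> A i j \<otimes> A j j"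
      proof (rule finsum_eq_two)
        show "A i k \<otimes> A k j = \<zero>" if "k \<in> {..<n}" "k \<noteq> i" "k \<noteq> j" for k
        proof (cases "i < k \<and> k < j")
          case True
          have "A i k = \<zero>"
            by (rule less.IH[of "k - i"]) (use True less.prems in auto)
          then show ?thesis using A'(1) by simp
        next
          case False
          with that show ?thesis using A'(1,2) by (cases "k < i") auto
        qed
      qed (use i j less.prems(2) A'(1) in \<open>auto simp: Pi_def\<close>)
      also have "\<dots> = a \<otimes> A i j \<oplus> A i j \<otimes> a" using diag i j by simp
      finally have "a \<otimes> A i j \<oplus> A i j \<otimes> a = A i j" by (rule sym)
      then show ?thesis
        by (rule idem_mult_add_mult_idem_eq_self_imp_zero[OF a_idem A'(1) a_central[OF A'(1)]])
    qed
  qed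
  then show ?thesis using ij by blast
qed

lemma upper_tri_idem_eq_scalar_mat:
  assumes cent: "idempotents_central R" and a: "a \<in> idems R"
    and A: "A \<in> carrier T" and idem: "A \<otimes>\<^bsub>T\<^esub> A = A" and diag: "\<And>i. i < n \<Longrightarrow> A i i = a"
  shows "A = scalar_mat R n a"
proof (intro ext)
  fix i j
  consider "i = j" "i < n" | "i < j" | "j < i \<or> n \<le> i"
    by linarith
  then show "A i j = scalar_mat R n a i j"
    by cases (use diag upper_tri_idem_above_diag_zero[OF assms] upper_tri_carrierD(2,3)[OF A]
      in \<open>auto simp: scalar_mat_def\<close>)
qed

abbreviation S :: "(nat \<Rightarrow> nat \<Rightarrow> 'a) ring" where
  "S \<equiv> const_diag_ring R n"

lemma const_diag_ring_carrier: "carrier S = {A \<in> carrier T. \<forall>i<n. \<forall>j<n. A i i = A j j}"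
  by (simp add: const_diag_ring_def)

lemma const_diag_ring_ops [simp]:
  "A \<otimes>\<^bsub>S\<^esub> B = A \<otimes>\<^bsub>T\<^esub> B" "A \<oplus>\<^bsub>S\<^esub> B = A \<oplus>\<^bsub>T\<^esub> B" "\<one>\<^bsub>S\<^esub> = \<one>\<^bsub>T\<^esub>" "\<zero>\<^bsub>S\<^esub> = \<zero>\<^bsub>T\<^esub>"
  by (simp_all add: const_diag_ring_def)

lemma const_diag_ring_carrierI:
  assumes "A \<in> carrier T" and "\<And>i j. i < n \<Longrightarrow> j < n \<Longrightarrow> A i i = A j j"
  shows "A \<in> carrier S"
  using assms unfolding const_diag_ring_carrier by blast

lemma const_diag_ring_carrierD:
  assumes "A \<in> carrier S"
  shows "A \<in> carrier T" and "i < n \<Longrightarrow> j < n \<Longrightarrow> A i i = A j j"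
  using assms unfolding const_diag_ring_carrier by blast+

lemma const_diag_subring: "subring (carrier S) T"
proof (rule ring.subringI[OF upper_tri_ring_is_ring])
  have T_abelian: "abelian_group T"
    by (rule ring.is_abelian_group[OF upper_tri_ring_is_ring])
  show "carrier S \<subseteq> carrier T"
    using const_diag_ring_carrierD(1) by blast
  show "\<one>\<^bsub>T\<^esub> \<in> carrier S"
    by (simp add: const_diag_ring_carrier upper_tri_one upper_tri_carrier_iff)
  show "\<ominus>\<^bsub>T\<^esub> A \<in> carrier S" if A: "A \<in> carrier S" for A
  proof (rule const_diag_ring_carrierI)
    note A' = const_diag_ring_carrierD[OF A]
    show "\<ominus>\<^bsub>T\<^esub> A \<in> carrier T"
      by (rule abelian_group.a_inv_closed[OF T_abelian A'(1)])
    show "(\<ominus>\<^bsub>T\<^esub> A) i i = (\<ominus>\<^bsub>T\<^esub> A) j j" if "i < n" "j < n" for i j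
      using A'(2)[OF that] by (simp add: upper_tri_neg[OF A'(1)])
  qed
  show "A \<otimes>\<^bsub>T\<^esub> B \<in> carrier S" if A: "A \<in> carrier S" and B: "B \<in> carrier S" for A B
  proof (rule const_diag_ring_carrierI)
    note A' = const_diag_ring_carrierD[OF A] and B' = const_diag_ring_carrierD[OF B]
    show "A \<otimes>\<^bsub>T\<^esub> B \<in> carrier T"
      by (rule upper_tri_mult_closed[OF A'(1) B'(1)])
    show "(A \<otimes>\<^bsub>T\<^esub> B) i i = (A \<otimes>\<^bsub>T\<^esub> B) j j" if "i < n" "j < n" for i j
      using A'(2)[OF that] B'(2)[OF that] that by (simp add: upper_tri_mult_diag[OF A'(1) B'(1)])
  qed
  show "A \<oplus>\<^bsub>T\<^esub> B \<in> carrier S" if A: "A \<in> carrier S" and B: "B \<in> carrier S" for A B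
  proof (rule const_diag_ring_carrierI)
    note A' = const_diag_ring_carrierD[OF A] and B' = const_diag_ring_carrierD[OF B]
    show "A \<oplus>\<^bsub>T\<^esub> B \<in> carrier T"
      by (rule abelian_monoid.a_closed[OF abelian_group.axioms(1)[OF T_abelian] A'(1) B'(1)])
    show "(A \<oplus>\<^bsub>T\<^esub> B) i i = (A \<oplus>\<^bsub>T\<^esub> B) j j" if "i < n" "j < n" for i j
      using A'(2)[OF that] B'(2)[OF that] by (simp add: upper_tri_add)
  qed
qed

lemma const_diag_ring_is_ring: "ring S"
  using ring.subring_is_ring[OF upper_tri_ring_is_ring const_diag_subring]
  by (simp add: const_diag_ring_def)

lemma const_diag_entry_ring_hom:
  assumes n: "0 < n"
  shows "ring_hom_ring S R (\<lambda>A. A 0 0)"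
proof (rule ring_hom_ringI[OF const_diag_ring_is_ring ring_axioms])
  fix A B assume "A \<in> carrier S" "B \<in> carrier S"
  then have "A \<in> carrier T" "B \<in> carrier T" by (simp_all add: const_diag_ring_carrierD)
  then show "A 0 0 \<in> carrier R" "(A \<otimes>\<^bsub>S\<^esub> B) 0 0 = A 0 0 \<otimes> B 0 0"
    "(A \<oplus>\<^bsub>S\<^esub> B) 0 0 = A 0 0 \<oplus> B 0 0"
    using n by (simp_all add: upper_tri_carrierD upper_tri_mult_diag upper_tri_add)
qed (use n in \<open>simp add: upper_tri_one\<close>)

lemma scalar_mat_in_carrier:
  assumes "a \<in> carrier R"
  shows "scalar_mat R n a \<in> carrier S"
  using assms by (simp add: const_diag_ring_carrier upper_tri_carrier_iff scalar_mat_def)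

lemma scalar_mat_ring_hom: "scalar_mat R n \<in> ring_hom R S"
proof (rule ring_hom_memI)
  fix a b assume a: "a \<in> carrier R" and b: "b \<in> carrier R"
  show "scalar_mat R n a \<in> carrier S" by (rule scalar_mat_in_carrier[OF a])
  show "scalar_mat R n (a \<oplus> b) = scalar_mat R n a \<oplus>\<^bsub>S\<^esub> scalar_mat R n b"
    by (intro ext) (simp add: scalar_mat_def upper_tri_add)
  show "scalar_mat R n (a \<otimes> b) = scalar_mat R n a \<otimes>\<^bsub>S\<^esub> scalar_mat R n b"
  proof (intro ext)
    fix i j
    have "(\<Oplus>k\<in>{..<n}. scalar_mat R n a i k \<otimes> scalar_mat R n b k j)
        = scalar_mat R n a i i \<otimes> scalar_mat R n b i j" if "i < n"
      by (rule finsum_eq_single) (use that a b in \<open>auto simp: scalar_mat_def\<close>)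
    then show "scalar_mat R n (a \<otimes> b) i j = (scalar_mat R n a \<otimes>\<^bsub>S\<^esub> scalar_mat R n b) i j"
      using a b by (auto simp: scalar_mat_def upper_tri_mult)
  qed
qed (simp add: scalar_mat_def upper_tri_one)

lemma const_diag_ring_idems:
  assumes cent: "idempotents_central R" and n: "0 < n"
  shows "idems S = scalar_mat R n ` idems R"
proof
  show "scalar_mat R n ` idems R \<subseteq> idems S"
    by (rule idems_ring_hom_image[OF scalar_mat_ring_hom])
  show "idems S \<subseteq> scalar_mat R n ` idems R"
  proof
    fix A assume A: "A \<in> idems S"
    then have AS: "A \<in> carrier S" and idem: "A \<otimes>\<^bsub>T\<^esub> A = A"
      by (simp_all add: idems_def)
    have a: "A 0 0 \<in> idems R"
      using idems_ring_hom_image[OF ring_hom_ring.homh[OF const_diag_entry_ring_hom[OF n]]] A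
      by blast
    moreover have "A = scalar_mat R n (A 0 0)"
      by (rule upper_tri_idem_eq_scalar_mat[OF cent a const_diag_ring_carrierD(1)[OF AS] idem])
        (use const_diag_ring_carrierD(2)[OF AS] n in blast)
    ultimately show "A \<in> scalar_mat R n ` idems R" by blast
  qed
qed

end

end

theorem mainTheorem4:
  fixes R :: "('a, 'b) ring_scheme" and I :: "'a set" and n :: nat
  assumes "ring R"
    and "idempotents_central R"
    and "ideal I R"
    and "weakly_clean R I"
    and "1 \<le> n"
  shows "ideal {A \<in> carrier (const_diag_ring R n). A 0 0 \<in> I} (const_diag_ring R n)
       \<and> idems (const_diag_ring R n) = scalar_mat R n ` idems R
       \<and> weakly_clean (const_diag_ring R n) {A \<in> carrier (const_diag_ring R n). A 0 0 \<in> I}"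
proof -
  interpret ring R by fact
  have n: "0 < n" using assms(5) by simp
  interpret diag: ring_hom_ring "const_diag_ring R n" R "\<lambda>A. A 0 0"
    by (rule const_diag_entry_ring_hom[OF n])
  have idems: "idems (const_diag_ring R n) = scalar_mat R n ` idems R"
    by (rule const_diag_ring_idems[OF assms(2) n])
  have "weakly_clean (const_diag_ring R n) {A \<in> carrier (const_diag_ring R n). A 0 0 \<in> I}"
  proof (rule diag.weakly_clean_vimage[OF assms(4)])
    fix e assume "e \<in> idems R"
    with idems n show "\<exists>E \<in> idems (const_diag_ring R n). E 0 0 = e"
      by (intro bexI[of _ "scalar_mat R n e"]) (auto simp: scalar_mat_def)
  qed
  with diag.ideal_vimage[OF assms(3)] idems show ?thesis by blast
qed

end
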